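(* For every $0<\varepsilon\le1$ there exists a function $\hat a\in C^\infty(\mathbb R)$, $\hat a\not\equiv0$, with $\operatorname{supp}\hat a\subset[-2,2]$, such that for every integer $n\ge1$ the trigonometric polynomial $$L_n(\theta):=\sum_{j\in\mathbb Z}\hat a\Big(\frac jn\Big)e^{ij\theta}$$ satisfies $$|L_n(\theta)|\le c\,n\exp\left\{-\frac{c'\varepsilon\, n|\theta|}{[\ln(e+n|\theta|)]^{1+\varepsilon}}\right\},\qquad \theta\in[-\pi,\pi],$$ where $c'>0$ is an absolute constant and $c$ depends only on $\varepsilon$. *)

theory Defs
  imports "HOL-Analysis.Analysis"
begin

definition smooth_real :: "(real \<Rightarrow> real) \<Rightarrow> bool" where
  "smooth_real f \<longleftrightarrow> (\<forall>k x. ((deriv ^^ k) f) differentiable (at x))"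

text \<open>The trigonometric polynomial L_n(theta) = sum over j in Z of a(j/n) e^{i j theta};
  the sum over Z is taken literally as an infinite (finitely supported) sum.\<close>
definition Lpoly :: "(real \<Rightarrow> real) \<Rightarrow> nat \<Rightarrow> real \<Rightarrow> complex" where
  "Lpoly a n \<theta> = (\<Sum>\<^sub>\<infinity>j\<in>(UNIV::int set). complex_of_real (a (real_of_int j / real n)) * cis (real_of_int j * \<theta>))"

end

theory Submission
  imports Defs
begin

text \<open>The function \<open>a\<close> is a Hoermander-type bump: the limit of iterated window means of the hat
  function \<open>max 0 (1 - \<bar>x\<bar>)\<close> over windows of half-widths \<open>d 0, d 1, \<dots>\<close> with \<open>\<Sum>i. d i = 1/2\<close>.
  It is smooth, vanishes outside \<open>[-3/2, 3/2]\<close>, and its \<open>k\<close>-th derivative is bounded by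
  \<open>\<Prod>i<k. 1 / d i\<close>, which for \<open>2 d i = ln (i + e) powr -\<epsilon> - ln (i + 1 + e) powr -\<epsilon>\<close> is at most
  \<open>(2 (k + e) ln (k + e) powr (1 + \<epsilon>) / \<epsilon>) ^ k\<close>.
  Summation by parts turns \<open>(1 - e^{i\<theta>}) ^ k L_n(\<theta>)\<close> into the trigonometric sum of the \<open>k\<close>-th backward
  difference of \<open>a\<close> with step \<open>1/n\<close>, which the mean value theorem bounds by
  \<open>(4n + k + 1) n^{-k} \<Prod>i<k. 1 / d i\<close>. As \<open>\<bar>1 - e^{i\<theta>}\<bar> \<ge> \<bar>\<theta>\<bar>/3\<close>, choosing
  \<open>k \<approx> \<epsilon> n\<bar>\<theta>\<bar> / (12 e ln (e + n\<bar>\<theta>\<bar>) powr (1 + \<epsilon>))\<close> gives the claimed decay.\<close>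

section \<open>Window means and central difference quotients\<close>

definition window_mean :: "real \<Rightarrow> (real \<Rightarrow> real) \<Rightarrow> real \<Rightarrow> real" where
  "window_mean d h x = integral {x-d..x+d} h / (2*d)"

definition central_quotient :: "real \<Rightarrow> (real \<Rightarrow> real) \<Rightarrow> real \<Rightarrow> real" where
  "central_quotient d h x = (h (x+d) - h (x-d)) / (2*d)"

lemma has_real_derivative_primitive:
  assumes "continuous_on UNIV h" "a < u"
  shows "((\<lambda>v. integral {a..v} h) has_real_derivative h u) (at u)"
proof -
  have "((\<lambda>v. integral {a..v} h) has_real_derivative h u) (at u within {a..u+1})"
    using assms by (intro integral_has_real_derivative continuous_on_subset[OF assms(1)]) auto
  moreover have "u \<in> interior {a..u+1}" using assms(2) by simp
  ultimately show ?thesis by (metis at_within_interior)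
qed

lemma has_real_derivative_window_mean:
  assumes h: "continuous_on UNIV h" and d: "0 < d"
  shows "(window_mean d h has_real_derivative central_quotient d h x) (at x)"
proof -
  define a where "a = x - d - 1"
  define P where "P v = integral {a..v} h" for v
  have "((\<lambda>y. (P (y + d) - P (y - d)) / (2*d)) has_real_derivative central_quotient d h x) (at x)"
    unfolding central_quotient_def P_def using d
    by (auto intro!: derivative_eq_intros DERIV_chain2[OF has_real_derivative_primitive[OF h]]
             simp: a_def field_simps)
  then show ?thesis
  proof (rule has_field_derivative_transform_within_open[of _ _ _ "ball x 1"])
    fix y assume "y \<in> ball x 1"
    then have y: "a \<le> y - d" using d unfolding a_def mem_ball dist_real_def by linarith
    have "integral {a..y-d} h + integral {y-d..y+d} h = integral {a..y+d} h"
      using y d by (intro Henstock_Kurzweil_Integration.integral_combine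
          integrable_continuous_interval continuous_on_subset[OF h]) auto
    then show "(P (y + d) - P (y - d)) / (2*d) = window_mean d h y"
      unfolding window_mean_def P_def by (simp add: algebra_simps)
  qed auto
qed

lemma has_real_derivative_central_quotient:
  assumes "\<And>y. (h has_real_derivative h' y) (at y)"
  shows "(central_quotient d h has_real_derivative central_quotient d h' x) (at x)"
proof -
  have "((\<lambda>y. h (y + d)) has_real_derivative h' (x + d)) (at x)"
       "((\<lambda>y. h (y + - d)) has_real_derivative h' (x + - d)) (at x)"
    using assms DERIV_shift by blast+
  from DERIV_cdivide[OF DERIV_diff[OF this], of "2*d"] show ?thesis
    by (simp add: central_quotient_def[abs_def])
qed

lemma continuous_on_window_mean:
  "continuous_on UNIV h \<Longrightarrow> 0 < d \<Longrightarrow> continuous_on UNIV (window_mean d h)"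
  using has_real_derivative_window_mean by (meson DERIV_isCont continuous_at_imp_continuous_on)

lemma continuous_on_central_quotient:
  assumes "continuous_on UNIV h" "0 < d"
  shows "continuous_on UNIV (central_quotient d h)"
  unfolding central_quotient_def[abs_def]
  by (intro continuous_intros continuous_on_compose2[OF assms(1)]) (use assms(2) in auto)

lemma window_mean_diff_le:
  assumes h1: "continuous_on UNIV h1" and h2: "continuous_on UNIV h2" and d: "0 < d"
    and B: "\<And>y. y \<in> {x-d..x+d} \<Longrightarrow> \<bar>h1 y - h2 y\<bar> \<le> B"
  shows "\<bar>window_mean d h1 x - window_mean d h2 x\<bar> \<le> B"
proof -
  have int: "h1 integrable_on {x-d..x+d}" "h2 integrable_on {x-d..x+d}"
    by (intro integrable_continuous_interval continuous_on_subset[OF h1] continuous_on_subset[OF h2]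
        subset_UNIV)+
  have "window_mean d h1 x - window_mean d h2 x = integral {x-d..x+d} (\<lambda>y. h1 y - h2 y) / (2*d)"
    by (simp add: window_mean_def integral_diff[OF int] diff_divide_distrib)
  moreover have "norm (integral {x-d..x+d} (\<lambda>y. h1 y - h2 y)) \<le> B * ((x+d) - (x-d))"
    by (rule integral_bound) (use d B in \<open>auto intro!: continuous_intros
        continuous_on_subset[OF h1] continuous_on_subset[OF h2]\<close>)
  ultimately show ?thesis
    using d by (simp add: abs_divide divide_le_eq)
qed

lemma central_quotient_diff_le:
  assumes "0 < d" and "\<And>y. \<bar>h1 y - h2 y\<bar> \<le> B"
  shows "\<bar>central_quotient d h1 x - central_quotient d h2 x\<bar> \<le> B / d"
proof -
  have "\<bar>(h1 (x+d) - h2 (x+d)) - (h1 (x-d) - h2 (x-d))\<bar> \<le> 2 * B"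
    using assms(2)[of "x+d"] assms(2)[of "x-d"] by linarith
  then show ?thesis
    using assms(1) unfolding central_quotient_def
    by (simp add: diff_divide_distrib[symmetric] divide_le_eq)
qed

lemma window_mean_vanishes:
  assumes "\<And>y. r < \<bar>y\<bar> \<Longrightarrow> h y = 0" "0 < d" "r + d < \<bar>x\<bar>"
  shows "window_mean d h x = 0"
proof -
  have "integral {x-d..x+d} h = integral {x-d..x+d} (\<lambda>_. 0)"
    using assms by (intro integral_cong) auto
  then show ?thesis by (simp add: window_mean_def)
qed

lemma central_quotient_vanishes:
  assumes "\<And>y. r < \<bar>y\<bar> \<Longrightarrow> h y = 0" "0 < d" "r + d < \<bar>x\<bar>"
  shows "central_quotient d h x = 0"
  using assms(1)[of "x+d"] assms(1)[of "x-d"] assms(2,3) by (simp add: central_quotient_def)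

text \<open>With \<open>T i = window_mean (d i)\<close> and \<open>D i = central_quotient (d i)\<close>, the chain
  \<open>foldr (smoothing_op d m) [0..<K] h\<close> is \<open>D 0 (\<dots> D (m - 1) (T m (\<dots> T (K - 1) h)))\<close>; since
  \<open>(T i g)' = D i g\<close> and the operators commute with differentiation, for \<open>m < K\<close> it is the
  \<open>m\<close>-th derivative of \<open>T 0 (\<dots> T (K - 1) h)\<close>.\<close>

definition smoothing_op :: "(nat \<Rightarrow> real) \<Rightarrow> nat \<Rightarrow> nat \<Rightarrow> (real \<Rightarrow> real) \<Rightarrow> real \<Rightarrow> real" where
  "smoothing_op d m i = (if i < m then central_quotient (d i) else window_mean (d i))"

lemma smoothing_op_less: "i < m \<Longrightarrow> smoothing_op d m i = central_quotient (d i)"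
  and smoothing_op_ge: "\<not> i < m \<Longrightarrow> smoothing_op d m i = window_mean (d i)"
  by (simp_all add: smoothing_op_def)

lemma continuous_on_smoothing_chain:
  assumes "\<And>i. 0 < d i" "continuous_on UNIV h"
  shows "continuous_on UNIV (foldr (smoothing_op d m) xs h)"
  by (induction xs)
    (auto simp: smoothing_op_def assms continuous_on_window_mean continuous_on_central_quotient)

lemma smoothing_chain_zero: "foldr (smoothing_op d m) xs (\<lambda>_. 0) = (\<lambda>_. 0)"
  by (induction xs) (auto simp: smoothing_op_def window_mean_def central_quotient_def)

lemma smoothing_chain_diff_le:
  assumes d: "\<And>i. 0 < d i" and h1: "continuous_on UNIV h1" and h2: "continuous_on UNIV h2"
    and B: "\<And>y. \<bar>h1 y - h2 y\<bar> \<le> B"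
  shows "\<bar>foldr (smoothing_op d m) xs h1 x - foldr (smoothing_op d m) xs h2 x\<bar>
          \<le> B * prod_list (map (\<lambda>i. if i < m then 1 / d i else 1) xs)"
proof (induction xs arbitrary: x)
  case Nil
  then show ?case using B by simp
next
  case (Cons i xs)
  let ?g1 = "foldr (smoothing_op d m) xs h1" and ?g2 = "foldr (smoothing_op d m) xs h2"
  let ?p = "prod_list (map (\<lambda>i. if i < m then 1 / d i else 1) xs)"
  show ?case
  proof (cases "i < m")
    case True
    have "\<bar>central_quotient (d i) ?g1 x - central_quotient (d i) ?g2 x\<bar> \<le> B * ?p / d i"
      by (rule central_quotient_diff_le[OF d Cons.IH])
    then show ?thesis using True by (simp add: smoothing_op_less)
  next
    case False
    have "\<bar>window_mean (d i) ?g1 x - window_mean (d i) ?g2 x\<bar> \<le> B * ?p"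
      by (rule window_mean_diff_le[OF continuous_on_smoothing_chain[OF d h1]
            continuous_on_smoothing_chain[OF d h2] d Cons.IH])
    then show ?thesis using False by (simp add: smoothing_op_ge)
  qed
qed

lemma smoothing_chain_vanishes:
  assumes d: "\<And>i. 0 < d i" and h: "\<And>y. r < \<bar>y\<bar> \<Longrightarrow> h y = 0"
    and x: "r + sum_list (map d xs) < \<bar>x\<bar>"
  shows "foldr (smoothing_op d m) xs h x = 0"
  using x
proof (induction xs arbitrary: x)
  case Nil
  then show ?case using h by simp
next
  case (Cons i xs)
  have "r + sum_list (map d xs) + d i < \<bar>x\<bar>" using Cons.prems by simp
  then show ?case
    using window_mean_vanishes[OF Cons.IH d] central_quotient_vanishes[OF Cons.IH d]
    by (simp add: smoothing_op_def)
qed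

lemma has_real_derivative_smoothing_chain:
  assumes d: "\<And>i. 0 < d i" and h: "continuous_on UNIV h" and "m < K" "j \<le> m"
  shows "(foldr (smoothing_op d m) [j..<K] h
           has_real_derivative foldr (smoothing_op d (Suc m)) [j..<K] h x) (at x)"
  using \<open>j \<le> m\<close>
proof (induction "m - j" arbitrary: j x)
  case 0
  then have j: "j = m" by simp
  have "foldr (smoothing_op d m) [Suc m..<K] h = foldr (smoothing_op d (Suc m)) [Suc m..<K] h"
    by (rule foldr_cong) (auto simp: smoothing_op_def)
  moreover have "(window_mean (d m) (foldr (smoothing_op d m) [Suc m..<K] h) has_real_derivative
      central_quotient (d m) (foldr (smoothing_op d m) [Suc m..<K] h) x) (at x)"
    by (rule has_real_derivative_window_mean[OF continuous_on_smoothing_chain[OF d h] d])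
  ultimately show ?case
    using \<open>m < K\<close> j by (simp add: upt_conv_Cons smoothing_op_less smoothing_op_ge)
next
  case (Suc n)
  then have "j < m" by simp
  with Suc have "(foldr (smoothing_op d m) [Suc j..<K] h has_real_derivative
      foldr (smoothing_op d (Suc m)) [Suc j..<K] h y) (at y)" for y
    by (metis Suc_diff_Suc Suc_leI nat.inject)
  then have "(central_quotient (d j) (foldr (smoothing_op d m) [Suc j..<K] h) has_real_derivative
      central_quotient (d j) (foldr (smoothing_op d (Suc m)) [Suc j..<K] h) x) (at x)"
    by (rule has_real_derivative_central_quotient)
  then show ?case
    using \<open>j < m\<close> \<open>m < K\<close> by (simp add: upt_conv_Cons smoothing_op_less)
qed

section \<open>A smooth bump with prescribed derivative bounds\<close>

definition hat :: "real \<Rightarrow> real" where "hat x = max 0 (1 - \<bar>x\<bar>)"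

lemma continuous_on_hat: "continuous_on UNIV hat"
  unfolding hat_def[abs_def] by (intro continuous_intros)

lemma window_mean_hat_dist:
  assumes "0 < d"
  shows "\<bar>window_mean d hat x - hat x\<bar> \<le> d"
proof -
  have "\<bar>window_mean d hat x - window_mean d (\<lambda>_. hat x) x\<bar> \<le> d"
    by (rule window_mean_diff_le[OF continuous_on_hat _ assms]) (auto simp: hat_def)
  then show ?thesis using assms by (simp add: window_mean_def)
qed

locale bump_widths =
  fixes d :: "nat \<Rightarrow> real"
  assumes widths_pos: "\<And>i. 0 < d i"
    and widths_summable: "summable d"
begin

definition tail :: "nat \<Rightarrow> real" where "tail K = (\<Sum>i. d (i + K))"

lemma sum_widths_le_tail:
  assumes "K \<le> K'"
  shows "sum d {K..<K'} \<le> tail K"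
proof -
  have "sum d {K..<K'} = (\<Sum>i<K' - K. d (i + K))"
    using assms by (intro sum.reindex_bij_witness[of _ "\<lambda>i. i + K" "\<lambda>i. i - K"]) auto
  also have "\<dots> \<le> tail K"
    unfolding tail_def using widths_pos widths_summable
    by (intro sum_le_suminf) (auto intro: less_imp_le simp: summable_iff_shift)
  finally show ?thesis .
qed

lemma tail_tendsto_zero: "tail \<longlonglongrightarrow> 0"
  unfolding tail_def[abs_def] by (rule suminf_exist_split2[OF widths_summable])

definition derivative_bound :: "nat \<Rightarrow> real" where
  "derivative_bound m = (\<Prod>i<m. 1 / d i)"

lemma derivative_bound_pos: "0 < derivative_bound m"
  unfolding derivative_bound_def using widths_pos by (intro prod_pos) auto

lemma chain_weight_eq_derivative_bound:
  assumes "m \<le> K"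
  shows "prod_list (map (\<lambda>i. if i < m then 1 / d i else 1) [0..<K]) = derivative_bound m"
proof -
  let ?f = "\<lambda>i. if i < m then 1 / d i else 1"
  have "prod_list (map ?f [0..<K]) = prod ?f {..<K}"
    using prod.distinct_set_conv_list[OF distinct_upt, of ?f 0 K] by (simp add: atLeast0LessThan)
  also have "\<dots> = prod ?f {..<m}"
    using assms by (intro prod.mono_neutral_right) auto
  also have "\<dots> = derivative_bound m"
    unfolding derivative_bound_def by (intro prod.cong) auto
  finally show ?thesis .
qed

definition bump_approx :: "nat \<Rightarrow> nat \<Rightarrow> real \<Rightarrow> real" where
  "bump_approx m K = foldr (smoothing_op d m) [0..<K] hat"

lemma bump_approx_bound:
  assumes "m \<le> K"
  shows "\<bar>bump_approx m K x\<bar> \<le> derivative_bound m"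
proof -
  have "\<bar>foldr (smoothing_op d m) [0..<K] hat x - foldr (smoothing_op d m) [0..<K] (\<lambda>_. 0) x\<bar>
      \<le> 1 * prod_list (map (\<lambda>i. if i < m then 1 / d i else 1) [0..<K])"
    by (rule smoothing_chain_diff_le[of d, OF widths_pos continuous_on_hat continuous_on_const])
      (simp add: hat_def)
  then show ?thesis
    by (simp add: bump_approx_def smoothing_chain_zero chain_weight_eq_derivative_bound[OF assms])
qed

lemma bump_approx_step:
  assumes "m \<le> K"
  shows "\<bar>bump_approx m (Suc K) x - bump_approx m K x\<bar> \<le> d K * derivative_bound m"
proof -
  have "bump_approx m (Suc K) = foldr (smoothing_op d m) [0..<K] (window_mean (d K) hat)"
    unfolding bump_approx_def using assms by (simp add: smoothing_op_ge)
  moreover have "\<bar>foldr (smoothing_op d m) [0..<K] (window_mean (d K) hat) x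
      - foldr (smoothing_op d m) [0..<K] hat x\<bar>
      \<le> d K * prod_list (map (\<lambda>i. if i < m then 1 / d i else 1) [0..<K])"
    by (rule smoothing_chain_diff_le[of d, OF widths_pos continuous_on_window_mean[OF continuous_on_hat widths_pos]
        continuous_on_hat window_mean_hat_dist[OF widths_pos]])
  ultimately show ?thesis
    by (simp add: bump_approx_def chain_weight_eq_derivative_bound[OF assms])
qed

lemma bump_approx_dist_tail:
  assumes "m \<le> K" "K \<le> K'"
  shows "\<bar>bump_approx m K' x - bump_approx m K x\<bar> \<le> derivative_bound m * tail K"
proof -
  have "\<bar>bump_approx m K' x - bump_approx m K x\<bar> \<le> derivative_bound m * sum d {K..<K'}"
    using assms(2)
  proof (induction K' rule: dec_induct)
    case (step n)
    then show ?case
      using bump_approx_step[of m n x] assms(1) by (simp add: algebra_simps abs_triangle_ineq4)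
  qed simp
  also have "\<dots> \<le> derivative_bound m * tail K"
    using sum_widths_le_tail[OF assms(2)] derivative_bound_pos by (simp add: less_imp_le)
  finally show ?thesis .
qed


lemma bump_approx_Cauchy: "Cauchy (\<lambda>K. bump_approx m K x)"
proof (rule CauchyI)
  fix e :: real assume "0 < e"
  have "(\<lambda>K. derivative_bound m * tail K) \<longlonglongrightarrow> derivative_bound m * 0"
    by (intro tendsto_intros tail_tendsto_zero)
  then have "\<forall>\<^sub>F K in sequentially. derivative_bound m * tail K < e / 2"
    using \<open>0 < e\<close> order_tendstoD(2)[of _ 0 _ "e / 2"] by simp
  then obtain N where N: "\<And>K. K \<ge> N \<Longrightarrow> derivative_bound m * tail K < e / 2"
    by (auto simp: eventually_sequentially)
  show "\<exists>M. \<forall>p\<ge>M. \<forall>q\<ge>M. norm (bump_approx m p x - bump_approx m q x) < e"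
  proof (intro exI allI impI)
    fix p q assume "max m N \<le> p" "max m N \<le> q"
    moreover have "derivative_bound m * tail (max m N) < e / 2" by (rule N) simp
    ultimately have "\<bar>bump_approx m p x - bump_approx m (max m N) x\<bar> < e / 2"
      and "\<bar>bump_approx m q x - bump_approx m (max m N) x\<bar> < e / 2"
      using bump_approx_dist_tail[of m "max m N"] by (meson max.cobounded1 order_le_less_trans)+
    then show "norm (bump_approx m p x - bump_approx m q x) < e" by (simp only: real_norm_def)
  qed
qed

definition bump_deriv :: "nat \<Rightarrow> real \<Rightarrow> real" where
  "bump_deriv m x = lim (\<lambda>K. bump_approx m K x)"

lemma bump_approx_tendsto: "(\<lambda>K. bump_approx m K x) \<longlonglongrightarrow> bump_deriv m x"
  unfolding bump_deriv_def using bump_approx_Cauchy Cauchy_convergent_iff convergent_LIMSEQ_iff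
  by blast

lemma bump_approx_dist:
  assumes "m \<le> K"
  shows "\<bar>bump_approx m K x - bump_deriv m x\<bar> \<le> derivative_bound m * tail K"
proof -
  have "(\<lambda>K'. \<bar>bump_approx m K' x - bump_approx m K x\<bar>) \<longlonglongrightarrow> \<bar>bump_deriv m x - bump_approx m K x\<bar>"
    by (intro tendsto_intros bump_approx_tendsto)
  then have "\<bar>bump_deriv m x - bump_approx m K x\<bar> \<le> derivative_bound m * tail K"
    by (rule LIMSEQ_le_const2) (use bump_approx_dist_tail assms in blast)
  then show ?thesis by simp
qed

lemma abs_bump_deriv_le: "\<bar>bump_deriv m x\<bar> \<le> derivative_bound m"
proof -
  have "(\<lambda>K. \<bar>bump_approx m (K + m) x\<bar>) \<longlonglongrightarrow> \<bar>bump_deriv m x\<bar>"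
    by (intro tendsto_intros LIMSEQ_ignore_initial_segment bump_approx_tendsto)
  then show ?thesis by (rule LIMSEQ_le_const2) (use bump_approx_bound in auto)
qed

text \<open>The derivatives of the approximations converge uniformly, so the limit may be
  differentiated term by term.\<close>

lemma has_real_derivative_bump_deriv:
  "(bump_deriv m has_real_derivative bump_deriv (Suc m) x) (at x)"
proof -
  define f where "f n = bump_approx m (n + Suc m)" for n
  define f' where "f' n y = (\<lambda>h. bump_approx (Suc m) (n + Suc m) y * h)" for n y
  have f: "(f n has_derivative f' n y) (at y within UNIV)" for n y
    unfolding f_def f'_def bump_approx_def has_field_derivative_def[symmetric]
    by (rule has_real_derivative_smoothing_chain[of d, OF widths_pos continuous_on_hat]) auto
  have f'_converges: "\<forall>\<^sub>F n in sequentially. \<forall>y\<in>UNIV. \<forall>h.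
      norm (f' n y h - bump_deriv (Suc m) y * h) \<le> e * norm h" if "e > 0" for e
  proof -
    have "(\<lambda>n. derivative_bound (Suc m) * tail (n + Suc m)) \<longlonglongrightarrow> derivative_bound (Suc m) * 0"
      by (intro tendsto_intros LIMSEQ_ignore_initial_segment tail_tendsto_zero)
    then have "\<forall>\<^sub>F n in sequentially. derivative_bound (Suc m) * tail (n + Suc m) < e"
      using \<open>e > 0\<close> by (auto dest: order_tendstoD)
    then show ?thesis
    proof (rule eventually_mono, intro ballI allI)
      fix n y h assume "derivative_bound (Suc m) * tail (n + Suc m) < e"
      then have "\<bar>bump_approx (Suc m) (n + Suc m) y - bump_deriv (Suc m) y\<bar> * \<bar>h\<bar> \<le> e * \<bar>h\<bar>"
        using bump_approx_dist[of "Suc m" "n + Suc m" y] by (intro mult_right_mono) auto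
      then show "norm (f' n y h - bump_deriv (Suc m) y * h) \<le> e * norm h"
        by (simp add: f'_def abs_mult left_diff_distrib[symmetric])
    qed
  qed
  have lim: "(\<lambda>n. f n y) \<longlonglongrightarrow> bump_deriv m y" for y
    unfolding f_def by (intro LIMSEQ_ignore_initial_segment bump_approx_tendsto)
  obtain g where "\<And>y. (\<lambda>n. f n y) \<longlonglongrightarrow> g y"
      "\<And>y. (g has_derivative (\<lambda>h. bump_deriv (Suc m) y * h)) (at y within UNIV)"
    using has_derivative_sequence[OF convex_UNIV f f'_converges _ lim] by blast
  moreover from this(1) have "g = bump_deriv m"
    using lim LIMSEQ_unique by blast
  ultimately show ?thesis by (simp add: has_field_derivative_def)
qed

lemma bump_deriv_vanishes:
  assumes "1 + tail 0 < \<bar>x\<bar>"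
  shows "bump_deriv m x = 0"
proof -
  have "bump_approx m K x = 0" for K
  proof -
    have "sum_list (map d [0..<K]) \<le> tail 0"
      using sum_widths_le_tail[of 0 K] by (simp add: interv_sum_list_conv_sum_set_nat)
    then show ?thesis
      unfolding bump_approx_def
      by (intro smoothing_chain_vanishes[of d 1, OF widths_pos]) (use assms in \<open>auto simp: hat_def\<close>)
  qed
  then have "(\<lambda>K. bump_approx m K x) \<longlonglongrightarrow> 0" by simp
  then show ?thesis using bump_approx_tendsto LIMSEQ_unique by blast
qed

lemma hat_bump_dist: "\<bar>hat x - bump_deriv 0 x\<bar> \<le> tail 0"
  using bump_approx_dist[of 0 0 x] by (simp add: bump_approx_def derivative_bound_def)

lemma higher_deriv_bump: "(deriv ^^ k) (bump_deriv 0) = bump_deriv k"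
  by (induction k) (auto intro!: DERIV_imp_deriv has_real_derivative_bump_deriv)

lemma smooth_real_bump: "smooth_real (bump_deriv 0)"
  unfolding smooth_real_def higher_deriv_bump
  using has_real_derivative_bump_deriv real_differentiable_def by blast

end

section \<open>Logarithmic window widths\<close>

text \<open>The widths telescope to \<open>1/2\<close>, and are only slightly smaller than \<open>1 / i\<close>: this is the
  borderline of non-quasianalyticity that makes the decay almost exponential.\<close>

definition log_widths :: "real \<Rightarrow> nat \<Rightarrow> real" where
  "log_widths \<epsilon> i = (ln (real i + exp 1) powr - \<epsilon> - ln (real (Suc i) + exp 1) powr - \<epsilon>) / 2"

lemma one_less_nat_plus_e: "1 < real i + exp 1"
  using exp_gt_one[of 1] by linarith

lemma log_widths_sums:
  assumes "0 < \<epsilon>"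
  shows "log_widths \<epsilon> sums (1 / 2)"
proof -
  have "filterlim (\<lambda>i. exp 1 + real i) at_top sequentially"
    by (rule filterlim_tendsto_add_at_top[OF tendsto_const filterlim_real_sequentially])
  then have "filterlim (\<lambda>i. ln (real i + exp 1)) at_top sequentially"
    using filterlim_compose[OF ln_at_top] by (simp add: add.commute)
  then have "(\<lambda>i. ln (real i + exp 1) powr - \<epsilon> / 2) \<longlonglongrightarrow> 0 / 2"
    using assms by (intro tendsto_divide tendsto_neg_powr) auto
  from telescope_sums'[OF this] show ?thesis
    by (simp add: log_widths_def[abs_def] diff_divide_distrib)
qed

lemma log_widths_lower:
  assumes "0 < \<epsilon>"
  shows "\<epsilon> / ((real (Suc i) + exp 1) * ln (real (Suc i) + exp 1) powr (1 + \<epsilon>)) \<le> 2 * log_widths \<epsilon> i"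
proof -
  let ?a = "real i + exp 1" and ?b = "real (Suc i) + exp 1"
  define f' where "f' y = - \<epsilon> * ln y powr (- \<epsilon> - 1) / y" for y :: real
  have "((\<lambda>y. ln y powr - \<epsilon>) has_real_derivative f' y) (at y)" if "?a \<le> y" for y
    using that one_less_nat_plus_e[of i] DERIV_fun_powr[of ln "1 / y" y "- \<epsilon>"]
    by (auto intro!: derivative_eq_intros simp: f'_def)
  then obtain z where z: "?a < z" "z < ?b"
    and mvt: "ln ?b powr - \<epsilon> - ln ?a powr - \<epsilon> = (?b - ?a) * f' z"
    using MVT2[of ?a ?b "\<lambda>y. ln y powr - \<epsilon>" f'] by auto
  have "1 < z" using z one_less_nat_plus_e[of i] by linarith
  then have "ln ?b powr (- \<epsilon> - 1) / ?b \<le> ln z powr (- \<epsilon> - 1) / z"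
    using z assms by (intro frac_le powr_mono2') auto
  also have "ln ?b powr (- \<epsilon> - 1) = 1 / ln ?b powr (1 + \<epsilon>)"
  proof -
    have "- \<epsilon> - 1 = - (1 + \<epsilon>)" by simp
    then show ?thesis by (simp only: powr_minus_divide)
  qed
  finally have "\<epsilon> * (1 / ln ?b powr (1 + \<epsilon>) / ?b) \<le> \<epsilon> * (ln z powr (- \<epsilon> - 1) / z)"
    using assms by (intro mult_left_mono) auto
  also have "\<dots> = 2 * log_widths \<epsilon> i"
    using mvt by (simp add: log_widths_def f'_def)
  finally show ?thesis by (simp add: mult.commute)
qed

lemma log_widths_pos:
  assumes "0 < \<epsilon>"
  shows "0 < log_widths \<epsilon> i"
proof -
  have "0 < \<epsilon> / ((real (Suc i) + exp 1) * ln (real (Suc i) + exp 1) powr (1 + \<epsilon>))"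
    using assms one_less_nat_plus_e[of "Suc i"] by (intro divide_pos_pos mult_pos_pos) auto
  then show ?thesis using log_widths_lower[OF assms, of i] by linarith
qed

lemma bump_widths_log_widths:
  assumes "0 < \<epsilon>"
  shows "bump_widths (log_widths \<epsilon>)"
  by unfold_locales
    (use log_widths_pos[OF assms] sums_summable[OF log_widths_sums[OF assms]] in auto)

lemma tail_log_widths:
  assumes "0 < \<epsilon>"
  shows "bump_widths.tail (log_widths \<epsilon>) 0 = 1 / 2"
  using sums_unique[OF log_widths_sums[OF assms]]
  by (simp add: bump_widths.tail_def[OF bump_widths_log_widths[OF assms]])

lemma derivative_bound_log_widths:
  assumes "0 < \<epsilon>"
  shows "bump_widths.derivative_bound (log_widths \<epsilon>) k
    \<le> (2 * (real k + exp 1) * ln (real k + exp 1) powr (1 + \<epsilon>) / \<epsilon>) ^ k"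
proof -
  let ?C = "2 * (real k + exp 1) * ln (real k + exp 1) powr (1 + \<epsilon>) / \<epsilon>"
  have "1 / log_widths \<epsilon> i \<le> ?C" if "i < k" for i
  proof -
    let ?b = "real (Suc i) + exp 1"
    have b: "1 < ?b" "?b \<le> real k + exp 1" using that one_less_nat_plus_e[of "Suc i"] by auto
    have "1 / log_widths \<epsilon> i \<le> 2 * (?b * ln ?b powr (1 + \<epsilon>)) / \<epsilon>"
      using log_widths_lower[OF assms, of i] log_widths_pos[OF assms, of i] assms b(1)
      by (simp add: divide_simps mult.commute)
    also have "\<dots> \<le> ?C"
    proof -
      have "ln ?b powr (1 + \<epsilon>) \<le> ln (real k + exp 1) powr (1 + \<epsilon>)"
        using assms b by (intro powr_mono2) auto
      then have "?b * ln ?b powr (1 + \<epsilon>) \<le> (real k + exp 1) * ln (real k + exp 1) powr (1 + \<epsilon>)"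
        using b by (intro mult_mono) auto
      then show ?thesis using assms unfolding mult.assoc by (intro divide_right_mono mult_left_mono) auto
    qed
    finally show ?thesis .
  qed
  then have "(\<Prod>i<k. 1 / log_widths \<epsilon> i) \<le> (\<Prod>i<k. ?C)"
    using log_widths_pos[OF assms] by (intro prod_mono) (auto simp: less_imp_le)
  then show ?thesis
    by (simp add: bump_widths.derivative_bound_def[OF bump_widths_log_widths[OF assms]])
qed

section \<open>Summation by parts for \<open>Lpoly\<close>\<close>

lemma Lpoly_eq_sum:
  assumes "finite S" "\<And>j. j \<notin> S \<Longrightarrow> g (real_of_int j / real n) = 0"
  shows "Lpoly g n \<theta> = (\<Sum>j\<in>S. complex_of_real (g (real_of_int j / real n)) * cis (real_of_int j * \<theta>))"
proof -
  have "Lpoly g n \<theta> = (\<Sum>\<^sub>\<infinity>j\<in>S. complex_of_real (g (real_of_int j / real n)) * cis (real_of_int j * \<theta>))"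
    unfolding Lpoly_def by (rule infsum_cong_neutral) (use assms(2) in auto)
  then show ?thesis using assms(1) by simp
qed

lemma norm_Lpoly_le:
  assumes "finite S" "\<And>j. j \<notin> S \<Longrightarrow> g (real_of_int j / real n) = 0" "\<And>x. \<bar>g x\<bar> \<le> M"
  shows "norm (Lpoly g n \<theta>) \<le> real (card S) * M"
proof -
  have e: "Lpoly g n \<theta> = (\<Sum>j\<in>S. complex_of_real (g (real_of_int j / real n)) * cis (real_of_int j * \<theta>))"
    by (rule Lpoly_eq_sum[OF assms(1)]) (rule assms(2))
  have "norm (Lpoly g n \<theta>) \<le> (\<Sum>j\<in>S. norm (complex_of_real (g (real_of_int j / real n)) * cis (real_of_int j * \<theta>)))"
    unfolding e by (rule norm_sum)
  also have "\<dots> \<le> real (card S) * M"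
    using assms(3) by (intro sum_bounded_above) (simp add: norm_mult)
  finally show ?thesis .
qed

lemma Lpoly_shift:
  assumes "0 < n"
  shows "Lpoly (\<lambda>x. g (x - 1 / real n)) n \<theta> = cis \<theta> * Lpoly g n \<theta>"
proof -
  have "Lpoly (\<lambda>x. g (x - 1 / real n)) n \<theta>
      = (\<Sum>\<^sub>\<infinity>j\<in>UNIV. complex_of_real (g (real_of_int (j + 1) / real n - 1 / real n))
          * cis (real_of_int (j + 1) * \<theta>))"
    unfolding Lpoly_def
    by (rule infsum_reindex_bij_betw[symmetric]) (rule bij_betwI[of _ _ _ "\<lambda>j. j - 1"], auto)
  also have "\<dots> = (\<Sum>\<^sub>\<infinity>j\<in>UNIV. cis \<theta> * (complex_of_real (g (real_of_int j / real n)) * cis (real_of_int j * \<theta>)))"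
    using assms by (intro infsum_cong) (simp add: add_divide_distrib distrib_right cis_mult[symmetric] algebra_simps)
  also have "\<dots> = cis \<theta> * Lpoly g n \<theta>"
    unfolding Lpoly_def by (rule infsum_cmult_right')
  finally show ?thesis .
qed

definition backward_diff :: "real \<Rightarrow> (real \<Rightarrow> real) \<Rightarrow> real \<Rightarrow> real" where
  "backward_diff h g x = g x - g (x - h)"

lemma Lpoly_backward_diff:
  assumes "0 < n" "finite S" "\<And>j. j \<notin> S \<Longrightarrow> g (real_of_int j / real n) = 0"
  shows "Lpoly (backward_diff (1 / real n) g) n \<theta> = (1 - cis \<theta>) * Lpoly g n \<theta>"
proof -
  let ?S = "S \<union> (\<lambda>j. j + 1) ` S" and ?c = "\<lambda>j. cis (real_of_int j * \<theta>)"
  have shift: "real_of_int j / real n - 1 / real n = real_of_int (j - 1) / real n" for j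
    by (simp add: diff_divide_distrib)
  have fin: "finite ?S" using assms(2) by simp
  have g: "g (real_of_int j / real n) = 0" if "j \<notin> ?S" for j
    using that assms(3) by blast
  have g_shift: "g (real_of_int j / real n - 1 / real n) = 0" if "j \<notin> ?S" for j
  proof -
    have "j - 1 \<notin> S" using that by (metis UnI2 diff_add_cancel image_eqI)
    then show ?thesis unfolding shift by (rule assms(3))
  qed
  have "Lpoly (backward_diff (1 / real n) g) n \<theta>
      = (\<Sum>j\<in>?S. complex_of_real (backward_diff (1 / real n) g (real_of_int j / real n)) * ?c j)"
    by (rule Lpoly_eq_sum[OF fin]) (simp add: backward_diff_def g g_shift)
  also have "\<dots> = (\<Sum>j\<in>?S. complex_of_real (g (real_of_int j / real n)) * ?c j)
        - (\<Sum>j\<in>?S. complex_of_real (g (real_of_int j / real n - 1 / real n)) * ?c j)"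
    by (simp add: backward_diff_def left_diff_distrib sum_subtractf)
  also have "\<dots> = Lpoly g n \<theta> - Lpoly (\<lambda>x. g (x - 1 / real n)) n \<theta>"
    using Lpoly_eq_sum[of ?S g n \<theta>, OF fin g] Lpoly_eq_sum[of ?S "\<lambda>x. g (x - 1 / real n)" n \<theta>, OF fin g_shift]
    by simp
  finally show ?thesis by (simp add: Lpoly_shift[OF assms(1)] algebra_simps)
qed

lemma backward_diff_pow_vanishes:
  assumes "\<And>y. y \<notin> {lo..hi} \<Longrightarrow> g y = 0" "0 \<le> h"
  shows "y \<notin> {lo..hi + real k * h} \<Longrightarrow> (backward_diff h ^^ k) g y = 0"
proof (induction k arbitrary: y)
  case 0
  then show ?case using assms(1) by simp
next
  case (Suc k)
  then have "y \<notin> {lo..hi + real k * h}" "y - h \<notin> {lo..hi + real k * h}"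
    using assms(2) by (auto simp: algebra_simps)
  then show ?case using Suc.IH by (simp add: backward_diff_def)
qed

lemma sample_vanishes:
  assumes "0 < n" "\<And>y. y \<notin> {lo..hi} \<Longrightarrow> g y = 0" "j \<notin> {\<lfloor>lo * real n\<rfloor>..\<lceil>hi * real n\<rceil>}"
  shows "g (real_of_int j / real n) = 0"
proof (rule assms(2))
  have "real_of_int j + 1 \<le> lo * real n \<or> hi * real n \<le> real_of_int j - 1"
    using assms(3) by (auto simp: not_le less_floor_iff ceiling_less_iff)
  then show "real_of_int j / real n \<notin> {lo..hi}"
    using assms(1) by (auto simp: field_simps)
qed

lemma Lpoly_backward_diff_pow:
  assumes "0 < n" "\<And>y. y \<notin> {lo..hi} \<Longrightarrow> g y = 0"
  shows "Lpoly ((backward_diff (1 / real n) ^^ k) g) n \<theta> = (1 - cis \<theta>) ^ k * Lpoly g n \<theta>"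
proof (induction k)
  case (Suc k)
  let ?hi = "hi + real k * (1 / real n)"
  have "(backward_diff (1 / real n) ^^ k) g y = 0" if "y \<notin> {lo..?hi}" for y
    using backward_diff_pow_vanishes[OF assms(2)] that by simp
  then have "(backward_diff (1 / real n) ^^ k) g (real_of_int j / real n) = 0"
    if "j \<notin> {\<lfloor>lo * real n\<rfloor>..\<lceil>?hi * real n\<rceil>}" for j
    using sample_vanishes[OF assms(1)] that by blast
  then have "Lpoly (backward_diff (1 / real n) ((backward_diff (1 / real n) ^^ k) g)) n \<theta>
      = (1 - cis \<theta>) * Lpoly ((backward_diff (1 / real n) ^^ k) g) n \<theta>"
    by (rule Lpoly_backward_diff[OF assms(1) finite_atLeastAtMost_int])
  then show ?case using Suc.IH by simp
qed simp

lemma has_real_derivative_backward_diff_pow: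
  assumes "\<And>m x. (G m has_real_derivative G (Suc m) x) (at x)"
  shows "((backward_diff h ^^ k) (G m) has_real_derivative (backward_diff h ^^ k) (G (Suc m)) x) (at x)"
proof (induction k arbitrary: x)
  case 0
  then show ?case using assms by simp
next
  case (Suc k)
  have "((\<lambda>y. (backward_diff h ^^ k) (G m) (y + - h)) has_real_derivative
      (backward_diff h ^^ k) (G (Suc m)) (x + - h)) (at x)"
    using Suc.IH DERIV_shift by blast
  from DERIV_diff[OF Suc.IH this] show ?case
    by (simp add: backward_diff_def[abs_def])
qed

lemma abs_backward_diff_pow_le:
  assumes "\<And>m x. (G m has_real_derivative G (Suc m) x) (at x)" "\<And>m x. \<bar>G m x\<bar> \<le> B m" "0 < h"
  shows "\<bar>(backward_diff h ^^ k) (G m) x\<bar> \<le> h ^ k * B (m + k)"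
proof (induction k arbitrary: m x)
  case 0
  then show ?case using assms(2) by simp
next
  case (Suc k)
  obtain z where "(backward_diff h ^^ k) (G m) x - (backward_diff h ^^ k) (G m) (x - h)
      = (x - (x - h)) * (backward_diff h ^^ k) (G (Suc m)) z"
    using MVT2[of "x - h" x] has_real_derivative_backward_diff_pow[of G, OF assms(1)] assms(3) by fastforce
  then have "\<bar>(backward_diff h ^^ Suc k) (G m) x\<bar> = h * \<bar>(backward_diff h ^^ k) (G (Suc m)) z\<bar>"
    using assms(3) by (simp add: backward_diff_def abs_mult)
  also have "\<dots> \<le> h * (h ^ k * B (Suc m + k))"
    using Suc.IH[of "Suc m" z] assms(3) by (intro mult_left_mono) auto
  finally show ?case by simp
qed

lemma norm_one_minus_cis_pow_Lpoly_le:
  fixes r :: nat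
  assumes "\<And>m x. (G m has_real_derivative G (Suc m) x) (at x)" "\<And>m x. \<bar>G m x\<bar> \<le> B m"
    and "0 < n" and supp: "\<And>y. y \<notin> {- real r..real r} \<Longrightarrow> G 0 y = 0"
  shows "norm ((1 - cis \<theta>) ^ k * Lpoly (G 0) n \<theta>) \<le> real (2 * r * n + k + 1) * (1 / real n) ^ k * B k"
proof -
  let ?S = "{- int (r * n)..int (r * n + k)}"
  have "(backward_diff (1 / real n) ^^ k) (G 0) (real_of_int j / real n) = 0" if "j \<notin> ?S" for j
  proof (rule backward_diff_pow_vanishes[OF supp])
    have "j < - int (r * n) \<or> int (r * n + k) < j"
      using that by auto
    then have "real_of_int j < real_of_int (- int (r * n)) \<or> real_of_int (int (r * n + k)) < real_of_int j"
      by (simp only: of_int_less_iff)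
    then show "real_of_int j / real n \<notin> {- real r..real r + real k * (1 / real n)}"
      using \<open>0 < n\<close> by (auto simp: field_simps)
  qed (use \<open>0 < n\<close> in auto)
  then have "norm (Lpoly ((backward_diff (1 / real n) ^^ k) (G 0)) n \<theta>)
      \<le> real (card ?S) * ((1 / real n) ^ k * B (0 + k))"
    using abs_backward_diff_pow_le[of G B "1 / real n" k 0, OF assms(1,2)] \<open>0 < n\<close> by (intro norm_Lpoly_le) auto
  moreover have "Lpoly ((backward_diff (1 / real n) ^^ k) (G 0)) n \<theta> = (1 - cis \<theta>) ^ k * Lpoly (G 0) n \<theta>"
    by (rule Lpoly_backward_diff_pow[OF \<open>0 < n\<close> supp])
  ultimately show ?thesis by (simp add: ac_simps)
qed

section \<open>The decay estimate\<close>

lemma norm_one_minus_cis_ge: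
  assumes "\<bar>\<theta>\<bar> \<le> pi"
  shows "\<bar>\<theta>\<bar> / 3 \<le> norm (1 - cis \<theta>)"
proof -
  define x where "x = \<theta> / 2"
  have "\<bar>sin x - x\<bar> \<le> \<bar>x\<bar> ^ 3 / 6"
    using Maclaurin_sin_bound[of x 3] by (simp add: eval_nat_numeral sin_coeff_def)
  moreover have "\<bar>x\<bar> ^ 3 \<le> \<bar>x\<bar> * 4"
  proof -
    have "\<bar>x\<bar> \<le> 2" using assms pi_less_4 by (simp add: x_def)
    then have "\<bar>x\<bar> ^ 2 \<le> 2 ^ 2" by (intro power_mono) auto
    then have "\<bar>x\<bar> * \<bar>x\<bar> ^ 2 \<le> \<bar>x\<bar> * 4" by (intro mult_left_mono) auto
    then show ?thesis by (simp add: power3_eq_cube power2_eq_square)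
  qed
  ultimately have "\<bar>x\<bar> / 3 \<le> \<bar>sin x\<bar>" by linarith
  moreover have "norm (1 - cis \<theta>) = 2 * \<bar>sin x\<bar>"
  proof (rule power2_eq_imp_eq)
    have "(norm (1 - cis \<theta>))\<^sup>2 = (1 - cos \<theta>)\<^sup>2 + (sin \<theta>)\<^sup>2"
      by (simp add: cmod_def cis.code)
    also have "\<dots> = (2 * \<bar>sin x\<bar>)\<^sup>2"
      using cos_double_sin[of x] sin_squared_eq[of \<theta>]
      by (simp add: x_def power2_eq_square algebra_simps)
    finally show "(norm (1 - cis \<theta>))\<^sup>2 = (2 * \<bar>sin x\<bar>)\<^sup>2" .
  qed auto
  ultimately show ?thesis by (simp add: x_def)
qed

lemma exp_exp_one_le: "exp (exp 1) \<le> (27::real)"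
proof -
  have "exp (exp 1) \<le> exp (3::real)" using exp_le by simp
  also have "\<dots> = exp 1 ^ 3" using exp_of_nat_mult[of 3 1] by simp
  also have "\<dots> \<le> 3 ^ 3" by (rule power_mono[OF exp_le]) simp
  finally show ?thesis by simp
qed

lemma one_le_ln_e_plus_powr:
  assumes "0 \<le> t" "0 \<le> \<epsilon>"
  shows "1 \<le> ln (exp 1 + t :: real) powr (1 + \<epsilon>)"
proof -
  have "ln (exp 1) \<le> ln (exp 1 + t)" using assms by (subst ln_le_cancel_iff) (auto intro: add_pos_nonneg)
  then show ?thesis using assms(2) by (intro ge_one_powr_ge_zero) auto
qed

lemma decay_exponent_le:
  fixes t \<epsilon> :: real
  assumes "0 < \<epsilon>" "\<epsilon> \<le> 1" "0 \<le> t"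
  shows "\<epsilon> * t / (12 * exp 1 * ln (exp 1 + t) powr (1 + \<epsilon>)) \<le> t"
proof -
  let ?D = "12 * exp 1 * ln (exp 1 + t) powr (1 + \<epsilon>)"
  have "1 * 1 \<le> exp 1 * ln (exp 1 + t) powr (1 + \<epsilon>)"
    using one_le_ln_e_plus_powr[of t \<epsilon>] assms by (intro mult_mono) auto
  then have "\<epsilon> * t \<le> t * ?D"
    using assms mult_right_mono[of \<epsilon> 1 t] mult_left_mono[of 1 ?D t] by simp
  moreover have "0 < ?D" using \<open>1 * 1 \<le> _\<close> by simp
  ultimately show ?thesis by (simp add: divide_le_eq)
qed

lemma moment_base_le:
  fixes t \<epsilon> :: real
  defines "Q \<equiv> ln (exp 1 + t) powr (1 + \<epsilon>)"
  defines "x \<equiv> \<epsilon> * t / (12 * exp 1 * Q)"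
  assumes \<epsilon>: "0 < \<epsilon>" "\<epsilon> \<le> 1" and t: "0 \<le> t" and k: "real k \<le> x"
    and large: "12 * exp 1 ^ 2 * Q \<le> \<epsilon> * t"
  shows "6 * (real k + exp 1) * ln (real k + exp 1) powr (1 + \<epsilon>) / \<epsilon> \<le> t / exp 1"
proof -
  have Q: "1 \<le> Q" unfolding Q_def using one_le_ln_e_plus_powr t \<epsilon> by simp
  have x: "x * (12 * exp 1 * Q) = \<epsilon> * t" unfolding x_def using Q by simp
  have "real k \<le> t" using k decay_exponent_le[OF \<epsilon> t] unfolding x_def Q_def by linarith
  then have "ln (real k + exp 1) powr (1 + \<epsilon>) \<le> Q"
    unfolding Q_def using \<epsilon> one_less_nat_plus_e[of k] by (intro powr_mono2) auto
  then have "6 * (real k + exp 1) * ln (real k + exp 1) powr (1 + \<epsilon>) \<le> 6 * (x + exp 1) * Q"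
    using k by (intro mult_mono) auto
  also have "\<dots> = \<epsilon> * t / (2 * exp 1) + 6 * exp 1 * Q"
    using x by (simp add: field_simps)
  also have "\<dots> \<le> \<epsilon> * t / exp 1"
    using large by (simp add: field_simps power2_eq_square)
  finally show ?thesis using \<epsilon> by (simp add: field_simps)
qed

lemma decay_from_moment_bounds:
  fixes L t \<epsilon> :: real and n :: nat
  assumes n: "1 \<le> n" and t: "0 \<le> t" "t \<le> 4 * real n" and \<epsilon>: "0 < \<epsilon>" "\<epsilon> \<le> 1"
    and moments: "\<And>k. L * t ^ k
      \<le> real (4 * n + k + 1) * (6 * (real k + exp 1) * ln (real k + exp 1) powr (1 + \<epsilon>) / \<epsilon>) ^ k"
  defines "Q \<equiv> ln (exp 1 + t) powr (1 + \<epsilon>)"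
  defines "x \<equiv> \<epsilon> * t / (12 * exp 1 * Q)"
  shows "L \<le> 200 * real n * exp (- x)"
proof -
  have Q: "1 \<le> Q" unfolding Q_def using one_le_ln_e_plus_powr t \<epsilon> by simp
  have x: "x * (12 * exp 1 * Q) = \<epsilon> * t" unfolding x_def using Q by simp
  txt \<open>For small \<open>\<epsilon> t\<close> the trivial bound (\<open>k = 0\<close>) suffices; otherwise use \<open>k = \<lfloor>x\<rfloor>\<close> moments.\<close>
  show ?thesis
  proof (cases "\<epsilon> * t < 12 * exp 1 ^ 2 * Q")
    case True
    have "x * (12 * exp 1 * Q) \<le> exp 1 * (12 * exp 1 * Q)"
      using True x by (simp add: power2_eq_square)
    then have "exp (- exp 1) \<le> exp (- x)" using Q by simp
    moreover have "1 / 27 \<le> exp (- exp 1 :: real)"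
      using exp_exp_one_le by (simp add: exp_minus field_simps)
    ultimately have "1 / 27 \<le> exp (- x)" by linarith
    then have "200 * real n * (1 / 27) \<le> 200 * real n * exp (- x)"
      by (intro mult_left_mono) auto
    moreover have "L \<le> 5 * real n" using moments[of 0] n by simp
    ultimately show ?thesis by simp
  next
    case False
    moreover have "0 < 12 * exp 1 ^ 2 * Q" using Q by simp
    ultimately have "0 < \<epsilon> * t" by linarith
    then have "0 < t" using \<epsilon> by (simp add: zero_less_mult_iff)
    define k where "k = nat \<lfloor>x\<rfloor>"
    have "0 \<le> x" unfolding x_def using \<epsilon> t Q by simp
    then have k: "real k \<le> x" "x < real k + 1" unfolding k_def by linarith+
    have "x \<le> t" unfolding x_def Q_def by (rule decay_exponent_le[OF \<epsilon> t(1)])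
    have "(6 * (real k + exp 1) * ln (real k + exp 1) powr (1 + \<epsilon>) / \<epsilon>) ^ k \<le> (t / exp 1) ^ k"
      using moment_base_le[OF \<epsilon> t(1) k(1)[unfolded x_def Q_def]] False \<epsilon>
      by (intro power_mono) (auto simp: Q_def intro!: divide_nonneg_nonneg mult_nonneg_nonneg add_nonneg_nonneg)
    then have "L * t ^ k \<le> real (4 * n + k + 1) * (t / exp 1) ^ k"
      using moments[of k] by (meson mult_left_mono of_nat_0_le_iff order_trans)
    also have "\<dots> = (real (4 * n + k + 1) * exp (- real k)) * t ^ k"
      by (simp add: power_divide exp_minus exp_of_nat_mult[symmetric] field_simps)
    finally have "L \<le> real (4 * n + k + 1) * exp (- real k)"
      using \<open>0 < t\<close> by simp
    also have "\<dots> \<le> (9 * real n) * (exp 1 * exp (- x))"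
      using k \<open>x \<le> t\<close> t n by (intro mult_mono) (auto simp flip: exp_add)
    also have "\<dots> = (9 * exp 1) * (real n * exp (- x))" by (simp add: ac_simps)
    also have "\<dots> \<le> 200 * (real n * exp (- x))"
      using exp_le by (intro mult_right_mono) auto
    finally show ?thesis by simp
  qed
qed

lemma bump_log_widths_vanishes:
  assumes "0 < \<epsilon>" "3 / 2 < \<bar>x\<bar>"
  shows "bump_widths.bump_deriv (log_widths \<epsilon>) m x = 0"
  using bump_widths.bump_deriv_vanishes[OF bump_widths_log_widths[OF assms(1)]]
    tail_log_widths[OF assms(1)] assms(2) by simp

lemma Lpoly_bump_moments:
  assumes "0 < \<epsilon>" "1 \<le> n" "\<bar>\<theta>\<bar> \<le> pi"
  shows "norm (Lpoly (bump_widths.bump_deriv (log_widths \<epsilon>) 0) n \<theta>) * (real n * \<bar>\<theta>\<bar>) ^ k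
    \<le> real (4 * n + k + 1) * (6 * (real k + exp 1) * ln (real k + exp 1) powr (1 + \<epsilon>) / \<epsilon>) ^ k"
proof -
  interpret bump_widths "log_widths \<epsilon>" by (rule bump_widths_log_widths[OF assms(1)])
  let ?L = "norm (Lpoly (bump_deriv 0) n \<theta>)"
  let ?D = "2 * (real k + exp 1) * ln (real k + exp 1) powr (1 + \<epsilon>) / \<epsilon>"
  have supp: "bump_deriv 0 y = 0" if "y \<notin> {- real 2..real 2}" for y
    using bump_log_widths_vanishes[OF assms(1)] that by auto
  have "?L * (\<bar>\<theta>\<bar> / 3) ^ k \<le> ?L * norm (1 - cis \<theta>) ^ k"
    using norm_one_minus_cis_ge[OF assms(3)] by (intro mult_left_mono power_mono) auto
  also have "\<dots> = norm ((1 - cis \<theta>) ^ k * Lpoly (bump_deriv 0) n \<theta>)"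
    by (simp add: norm_mult norm_power)
  also have "\<dots> \<le> real (4 * n + k + 1) * (1 / real n) ^ k * derivative_bound k"
    using norm_one_minus_cis_pow_Lpoly_le[where G=bump_deriv and B=derivative_bound and r=2,
        OF has_real_derivative_bump_deriv abs_bump_deriv_le _ supp] assms(2)
    by simp
  also have "\<dots> \<le> real (4 * n + k + 1) * (1 / real n) ^ k * ?D ^ k"
    using derivative_bound_log_widths[OF assms(1)] by (intro mult_left_mono) auto
  finally have "?L * (\<bar>\<theta>\<bar> / 3) ^ k * (3 * real n) ^ k
      \<le> real (4 * n + k + 1) * (1 / real n) ^ k * ?D ^ k * (3 * real n) ^ k"
    by (intro mult_right_mono) auto
  moreover have "(\<bar>\<theta>\<bar> / 3) ^ k * (3 * real n) ^ k = (real n * \<bar>\<theta>\<bar>) ^ k"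
    unfolding power_mult_distrib[symmetric] by (simp add: mult.commute)
  moreover have "(1 / real n) ^ k * ?D ^ k * (3 * real n) ^ k
      = (6 * (real k + exp 1) * ln (real k + exp 1) powr (1 + \<epsilon>) / \<epsilon>) ^ k"
  proof -
    have "real n \<noteq> 0" using assms(2) by simp
    then have "1 / real n * ?D * (3 * real n)
        = 6 * (real k + exp 1) * ln (real k + exp 1) powr (1 + \<epsilon>) / \<epsilon>"
      using assms(1) by (simp add: field_simps)
    then show ?thesis by (metis power_mult_distrib)
  qed
  ultimately show ?thesis by (simp only: mult.assoc)
qed

lemma norm_Lpoly_log_bump_le:
  assumes "0 < \<epsilon>" "\<epsilon> \<le> 1" "1 \<le> n" "\<bar>\<theta>\<bar> \<le> pi"
  shows "norm (Lpoly (bump_widths.bump_deriv (log_widths \<epsilon>) 0) n \<theta>) \<le> 200 * real n *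
    exp (- (1 / (12 * exp 1) * \<epsilon> * real n * \<bar>\<theta>\<bar>) / (ln (exp 1 + real n * \<bar>\<theta>\<bar>)) powr (1 + \<epsilon>))"
proof -
  have "real n * \<bar>\<theta>\<bar> \<le> real n * 4"
    using assms(4) pi_less_4 by (intro mult_left_mono) auto
  then have "norm (Lpoly (bump_widths.bump_deriv (log_widths \<epsilon>) 0) n \<theta>) \<le> 200 * real n *
      exp (- (\<epsilon> * (real n * \<bar>\<theta>\<bar>) / (12 * exp 1 * ln (exp 1 + real n * \<bar>\<theta>\<bar>) powr (1 + \<epsilon>))))"
    using assms by (intro decay_from_moment_bounds Lpoly_bump_moments) auto
  then show ?thesis by (simp add: field_simps)
qed

lemma log_bump_witness:
  assumes "0 < \<epsilon>" "\<epsilon> \<le> 1"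
  shows "\<exists>c>0. \<exists>a::real \<Rightarrow> real.
    smooth_real a \<and> (\<exists>x. a x \<noteq> 0) \<and> closure {x. a x \<noteq> 0} \<subseteq> {-2..2} \<and>
    (\<forall>n::nat. n \<ge> 1 \<longrightarrow> (\<forall>\<theta>\<in>{-pi..pi}.
       norm (Lpoly a n \<theta>) \<le> c * real n * exp (- (1 / (12 * exp 1) * \<epsilon> * real n * \<bar>\<theta>\<bar>) /
         (ln (exp 1 + real n * \<bar>\<theta>\<bar>)) powr (1 + \<epsilon>))))"
proof -
  interpret bump_widths "log_widths \<epsilon>" by (rule bump_widths_log_widths[OF assms(1)])
  have "\<bar>hat 0 - bump_deriv 0 0\<bar> \<le> 1 / 2"
    using hat_bump_dist[of 0] tail_log_widths[OF assms(1)] by simp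
  then have nonzero: "bump_deriv 0 0 \<noteq> 0" by (auto simp: hat_def)
  have "{x. bump_deriv 0 x \<noteq> 0} \<subseteq> {-2..2}"
    using bump_log_widths_vanishes[OF assms(1)] by force
  then have support: "closure {x. bump_deriv 0 x \<noteq> 0} \<subseteq> {-2..2}"
    by (rule closure_minimal) simp
  show ?thesis
    by (rule exI[of _ 200], intro conjI exI[of _ "bump_deriv 0"])
      (use nonzero support smooth_real_bump norm_Lpoly_log_bump_le[OF assms] in auto)
qed

theorem theorem2p2:
  shows "\<exists>c'>0. \<forall>\<epsilon>::real. 0 < \<epsilon> \<and> \<epsilon> \<le> 1 \<longrightarrow>
    (\<exists>c>0. \<exists>a::real \<Rightarrow> real.
       smooth_real a \<and> (\<exists>x. a x \<noteq> 0) \<and> closure {x. a x \<noteq> 0} \<subseteq> {-2..2} \<and>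
       (\<forall>n::nat. n \<ge> 1 \<longrightarrow> (\<forall>\<theta>\<in>{-pi..pi}.
          norm (Lpoly a n \<theta>) \<le>
            c * real n * exp (- (c' * \<epsilon> * real n * \<bar>\<theta>\<bar>) /
               (ln (exp 1 + real n * \<bar>\<theta>\<bar>)) powr (1 + \<epsilon>)))))"
proof -
  have "0 < 1 / (12 * exp 1 :: real)" by simp
  with log_bump_witness show ?thesis by blast
qed

end
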